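(* As formal power series in $t$, $$\sum_{m\ge 1}\frac{\big((m-1)!\big)^2t^{m}}{\prod_{k=1}^m (1+k^2 t)}=t \qquad\text{and}\qquad \sum_{m\ge 1}\frac{m!(m-1)!\,t^{m}}{\prod_{k=1}^m \big(1+k(k+1)t\big)}=t.$$ *)

theory Defs
  imports "HOL-Computational_Algebra.Formal_Power_Series"
begin

end

theory Submission
  imports Defs
begin

text \<open>
  Write \<open>P\<^sub>n = (1 + c\<^sub>1 t) \<cdots> (1 + c\<^sub>n t)\<close> and \<open>R\<^sub>n = c\<^sub>1 \<cdots> c\<^sub>n t\<^sup>n\<^sup>+\<^sup>1 / P\<^sub>n\<close>.
  Since \<open>(1 + c\<^sub>m\<^sub>+\<^sub>1 t) - c\<^sub>m\<^sub>+\<^sub>1 t = 1\<close>, the \<open>m\<close>-th term of the series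
  \<open>\<Sum>\<^sub>m c\<^sub>1 \<cdots> c\<^sub>m t\<^sup>m\<^sup>+\<^sup>1 / P\<^sub>m\<^sub>+\<^sub>1\<close> is \<open>R\<^sub>m - R\<^sub>m\<^sub>+\<^sub>1\<close>. As \<open>R\<^sub>n\<close> is divisible
  by \<open>t\<^sup>n\<^sup>+\<^sup>1\<close>, it tends to \<open>0\<close> in the \<open>t\<close>-adic topology, so the series telescopes
  to \<open>R\<^sub>0 = t\<close>, for an arbitrary sequence \<open>c\<close>. Both identities are the cases
  \<open>c\<^sub>k = k\<^sup>2\<close> and \<open>c\<^sub>k = k (k + 1)\<close>.
\<close>

lemma fps_X_power_mult_tendsto_zero:
  fixes f :: "nat \<Rightarrow> 'a :: comm_ring_1 fps"
  shows "(\<lambda>n. fps_X ^ n * f n) \<longlonglongrightarrow> 0"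
proof (rule tendsto_fpsI)
  fix k
  show "eventually (\<lambda>n. fps_nth (fps_X ^ n * f n) k = fps_nth 0 k) sequentially"
    using eventually_gt_at_top[of k] by eventually_elim (simp add: fps_X_power_mult_nth)
qed

lemma fps_telescope_sums':
  fixes f :: "nat \<Rightarrow> 'a :: ab_group_add fps"
  assumes "f \<longlonglongrightarrow> c"
  shows "(\<lambda>n. f n - f (Suc n)) sums (f 0 - c)"
  unfolding sums_def sum_lessThan_telescope'
proof (rule tendsto_fpsI)
  fix k
  show "eventually (\<lambda>n. fps_nth (f 0 - f n) k = fps_nth (f 0 - c) k) sequentially"
    using assms unfolding tendsto_fps_iff by (auto elim: eventually_mono)
qed

lemma fps_prod_telescope_sums:
  fixes c :: "nat \<Rightarrow> 'a :: field"
  shows "(\<lambda>m. fps_const (\<Prod>k = 1..m. c k) * fps_X ^ (m + 1)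
            * inverse (\<Prod>k = 1..m + 1. 1 + fps_const (c k) * fps_X)) sums fps_X"
proof -
  define P where "P n = (\<Prod>k = 1..n. 1 + fps_const (c k) * fps_X)" for n
  define R where "R n = fps_X ^ (n + 1) * (fps_const (\<Prod>k = 1..n. c k) * inverse (P n))" for n
  have P_nth_0: "fps_nth (P n) 0 = 1" for n
    by (induction n) (auto simp: P_def prod.nat_ivl_Suc' fps_mult_nth_0)
  have term_eq: "fps_const (\<Prod>k = 1..m. c k) * fps_X ^ (m + 1) * inverse (P (m + 1))
      = R m - R (Suc m)" for m
  proof -
    define A where "A = 1 + fps_const (c (Suc m)) * fps_X"
    have "P (Suc m) = P m * A"
      by (simp add: P_def A_def prod.nat_ivl_Suc')
    then have "inverse (P m) = inverse (P (Suc m)) * A"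
      using P_nth_0[of m] by (simp add: A_def fps_inverse_mult mult.assoc inverse_mult_eq_1)
    define T where "T = fps_const (\<Prod>k = 1..m. c k) * fps_X ^ (m + 1) * inverse (P (Suc m))"
    have "R m = T * A"
      unfolding R_def T_def \<open>inverse (P m) = _\<close> by (simp only: mult_ac)
    moreover have "R (Suc m) = T * (fps_const (c (Suc m)) * fps_X)"
      unfolding R_def T_def
      by (simp only: prod.nat_ivl_Suc' fps_const_mult[symmetric] power_Suc2 mult_ac, simp)
    ultimately have "R m - R (Suc m) = T * (A - fps_const (c (Suc m)) * fps_X)"
      by (simp only: right_diff_distrib)
    then show ?thesis
      by (simp add: A_def T_def)
  qed
  have "R \<longlonglongrightarrow> 0"
    using fps_X_power_mult_tendsto_zero[of "\<lambda>n. fps_X * fps_const (\<Prod>k = 1..n. c k) * inverse (P n)"]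
    unfolding R_def Suc_eq_plus1[symmetric] power_Suc2 mult.assoc .
  then have "(\<lambda>m. R m - R (Suc m)) sums (R 0 - 0)"
    by (rule fps_telescope_sums')
  moreover have "R 0 = fps_X"
    by (simp add: R_def P_def)
  ultimately show ?thesis
    unfolding P_def[symmetric] term_eq by simp
qed

lemma fact_Suc_mult_fact_eq_prod: "fact (Suc m) * fact m = (\<Prod>k = 1..m. k * Suc k)"
proof (induction m)
  case (Suc m)
  have "fact (Suc (Suc m)) * fact (Suc m) = (fact (Suc m) * fact m) * (Suc m * Suc (Suc m))"
    by (simp only: fact_Suc[of "Suc m"] fact_Suc[of m] of_nat_id mult_ac)
  also have "\<dots> = (\<Prod>k = 1..Suc m. k * Suc k)"
    by (simp only: Suc.IH prod.nat_ivl_Suc'[of 1 m] mult.commute[of "prod _ _"])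
  finally show ?case .
qed simp

theorem corollary5p1:
  shows "(\<lambda>m. fps_const (of_nat (fact m ^ 2) :: rat) * fps_X ^ (m + 1)
            * inverse (\<Prod>k = 1..m + 1. 1 + fps_const (of_nat (k ^ 2)) * fps_X))
           sums fps_X
       \<and> (\<lambda>m. fps_const (of_nat (fact (m + 1) * fact m) :: rat) * fps_X ^ (m + 1)
            * inverse (\<Prod>k = 1..m + 1. 1 + fps_const (of_nat (k * (k + 1))) * fps_X))
           sums fps_X" (is "?squares \<and> ?pronic")
proof
  have "of_nat (fact m ^ 2) = (\<Prod>k = 1..m. of_nat (k ^ 2) :: rat)" for m
    by (simp add: fact_prod prod_power_distrib)
  then show ?squares
    using fps_prod_telescope_sums[of "\<lambda>k. of_nat (k ^ 2)"] by simp
  have "of_nat (fact (m + 1) * fact m) = (\<Prod>k = 1..m. of_nat (k * (k + 1)) :: rat)" for m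
    using fact_Suc_mult_fact_eq_prod[of m] by (simp add: of_nat_prod)
  then show ?pronic
    using fps_prod_telescope_sums[of "\<lambda>k. of_nat (k * (k + 1))"] by simp
qed

end
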